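(* Let $\mathcal{X}$ be a set of nonempty causally complete open subsets of $\mathbb{R}^{1+s}$ satisfying the following two properties: ($\mathbf{c2}_1$) for any $X\in\mathcal{X}$ and $X_0\in\mathcal{X}$ with $X_0\subset X$, there exists $X_{00}\in\mathcal{X}$ with $X_{00}\subset X_0$ such that $\mathcal{X}(X\cap X_{00}')$ is nonempty and connected; ($\mathbf{c2}_2$) for any $X\in\mathcal{X}$ and $X_1,X_2\in\mathcal{X}$ with $X_1,X_2\subset X$, there exist $X_{10},X_{20}\in\mathcal{X}$ with $X_{10}\subset X_1$, $X_{20}\subset X_2$ such that $\mathcal{X}(X\cap X_{10}'\cap X_{20}')$ is nonempty. Then for every $X\in\mathcal{X}$ the set $\mathcal{X}^{(2)}_\times(X)$ is nonempty and connected.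
   Context: $R'$ denotes the causal complement of $R\subset\mathbb{R}^{1+s}$; $X_1\perp X_2$ (causal disjointness) means $(x_1-x_2)^2<0$ for all $x_1\in X_1,x_2\in X_2$ (Minkowski metric with signature $(+,-,\dots,-)$). For $R\subset\mathbb{R}^{1+s}$: $\mathcal{X}(R)=\{X\in\mathcal{X}: X\subset R\}$, half-ordered by inclusion, and $\mathcal{X}^{(2)}_\times(R)=\{(X_1,X_2)\in\mathcal{X}(R)\times\mathcal{X}(R): X_1\perp X_2\}$, half-ordered by componentwise inclusion. A path of length $N$ in a half-ordered set $(A,\subset)$ is a sequence $a_0,\dots,a_N\in A$ with $a_{j-1}\subset a_j$ or $a_j\subset a_{j-1}$ for each $j$; $A$ is connected if any two of its elements are joined by a path of finite length. *)

theory Defs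
  imports "HOL-Analysis.Analysis"
begin

text \<open>Minkowski space R^{1+s}: points are pairs (t, x) with time t and spatial part
  x :: real^'s (s = CARD('s)). Metric signature (+,-,...,-).\<close>

type_synonym 's mpoint = "real \<times> (real ^ 's)"

definition mink_sq :: "'s::finite mpoint \<Rightarrow> real" where
  "mink_sq p = (fst p)\<^sup>2 - (norm (snd p))\<^sup>2"

definition causally_disjoint :: "'s::finite mpoint set \<Rightarrow> 's mpoint set \<Rightarrow> bool" where
  "causally_disjoint X1 X2 \<longleftrightarrow> (\<forall>x1\<in>X1. \<forall>x2\<in>X2. mink_sq (x1 - x2) < 0)"

definition causal_compl :: "'s::finite mpoint set \<Rightarrow> 's mpoint set" where
  "causal_compl R = {y. \<forall>x\<in>R. mink_sq (x - y) < 0}"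

definition causally_complete :: "'s::finite mpoint set \<Rightarrow> bool" where
  "causally_complete R \<longleftrightarrow> causal_compl (causal_compl R) = R"

definition Xsub :: "'s::finite mpoint set set \<Rightarrow> 's mpoint set \<Rightarrow> 's mpoint set set" where
  "Xsub XX R = {X \<in> XX. X \<subseteq> R}"

definition Xpairs :: "'s::finite mpoint set set \<Rightarrow> 's mpoint set
    \<Rightarrow> ('s mpoint set \<times> 's mpoint set) set" where
  "Xpairs XX R = {(X1, X2). X1 \<in> Xsub XX R \<and> X2 \<in> Xsub XX R \<and> causally_disjoint X1 X2}"

definition hos_connected :: "'b set \<Rightarrow> ('b \<Rightarrow> 'b \<Rightarrow> bool) \<Rightarrow> bool" where
  "hos_connected A le \<longleftrightarrow>
     (\<forall>a\<in>A. \<forall>b\<in>A. \<exists>(N::nat) p. p 0 = a \<and> p N = b \<and> (\<forall>j\<le>N. p j \<in> A) \<and>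
        (\<forall>j\<in>{1..N}. le (p (j - 1)) (p j) \<or> le (p j) (p (j - 1))))"

definition pair_le :: "('a set \<times> 'a set) \<Rightarrow> ('a set \<times> 'a set) \<Rightarrow> bool" where
  "pair_le P Q \<longleftrightarrow> fst P \<subseteq> fst Q \<and> snd P \<subseteq> snd Q"

end

theory Submission
  imports Defs
begin

text \<open>Two pairs (A, B) and (A, B') with a common first component are joined as soon as
  some A00 \<subseteq> A has connected \<X>(X \<inter> A00'): shrink A to A00, walk from B to B' inside
  \<X>(X \<inter> A00'), and enlarge A00 back to A. Since c2_1 provides such an A00 below every
  A0 \<subseteq> A, the pair (A, B) is joined to (A0, Z) for every Z \<in> \<X>(X \<inter> A0').
  For two pairs (X1, X2) and (Y1, Y2), c2_2 yields X10 \<subseteq> X1, Y10 \<subseteq> Y1 and some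
  Z \<in> \<X>(X \<inter> X10' \<inter> Y10'); then (X1, X2) \<sim> (X10, Z) \<sim> (Y10, Z) \<sim> (Y1, Y2), the middle
  link coming from the swapped pairs (Z, X10) \<sim> (Z, Y10).\<close>

definition restrictp :: "'b set \<Rightarrow> ('b \<Rightarrow> 'b \<Rightarrow> bool) \<Rightarrow> 'b \<Rightarrow> 'b \<Rightarrow> bool" where
  "restrictp A le x y \<longleftrightarrow> x \<in> A \<and> y \<in> A \<and> le x y"

lemma ball_atLeastAtMost_one_pred_iff:
  "(\<forall>j\<in>{1..N}. Q (j - 1) j) \<longleftrightarrow> (\<forall>i<N. Q i (Suc i))"
proof
  assume Q: "\<forall>j\<in>{1..N}. Q (j - 1) j"
  show "\<forall>i<N. Q i (Suc i)"
  proof (intro allI impI)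
    fix i assume "i < N"
    then have "Suc i \<in> {1..N}" by simp
    then show "Q i (Suc i)" using Q by fastforce
  qed
next
  assume Q: "\<forall>i<N. Q i (Suc i)"
  show "\<forall>j\<in>{1..N}. Q (j - 1) j"
  proof
    fix j :: nat assume "j \<in> {1..N}"
    then obtain i where "j = Suc i" "i < N" by (cases j) auto
    then show "Q (j - 1) j" using Q by simp
  qed
qed

lemma equivclp_iff_path:
  "equivclp r a b \<longleftrightarrow> (\<exists>N p. p 0 = a \<and> p N = b \<and> (\<forall>i<N. symclp r (p i) (p (Suc i))))"
  by (simp add: equivclp_def rtranclp_power relpowp_fun_conv)

lemma hos_connected_iff_equivclp:
  "hos_connected A le \<longleftrightarrow> (\<forall>a\<in>A. \<forall>b\<in>A. equivclp (restrictp A le) a b)"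
proof -
  have path_iff: "(\<forall>i<N. symclp (restrictp A le) (p i) (p (Suc i))) \<longleftrightarrow>
      (\<forall>j\<le>N. p j \<in> A) \<and> (\<forall>j\<in>{1..N}. le (p (j - 1)) (p j) \<or> le (p j) (p (j - 1)))"
    if "p 0 \<in> A" for N :: nat and p :: "nat \<Rightarrow> _"
  proof -
    have "(\<forall>j\<le>N. p j \<in> A) \<longleftrightarrow> (\<forall>i<N. p i \<in> A \<and> p (Suc i) \<in> A)"
      using that by (simp add: All_less_Suc2 flip: less_Suc_eq_le) (metis less_Suc_eq_0_disj less_SucI)
    moreover have "symclp (restrictp A le) x y \<longleftrightarrow> (x \<in> A \<and> y \<in> A) \<and> (le x y \<or> le y x)" for x y
      unfolding symclp_def restrictp_def by auto
    ultimately show ?thesis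
      using ball_atLeastAtMost_one_pred_iff[of N "\<lambda>i j. le (p i) (p j) \<or> le (p j) (p i)"]
      by (simp only: imp_conjR all_conj_distrib)
  qed
  show ?thesis
    unfolding hos_connected_def equivclp_iff_path
    by (intro ball_cong ex_cong1 conj_cong refl) (simp add: path_iff)
qed

lemma equivclp_restrictp_map:
  assumes "equivclp (restrictp A le) a b"
    and "\<And>x. x \<in> A \<Longrightarrow> f x \<in> B"
    and "\<And>x y. x \<in> A \<Longrightarrow> y \<in> A \<Longrightarrow> le x y \<Longrightarrow> le' (f x) (f y)"
  shows "equivclp (restrictp B le') (f a) (f b)"
  using assms(1)
proof (induction rule: equivclp_induct)
  case base
  show ?case by simp
next
  case (step y z)
  then have "restrictp B le' (f y) (f z) \<or> restrictp B le' (f z) (f y)"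
    using assms(2,3) unfolding restrictp_def by blast
  with step.IH show ?case by (rule equivclp_into_equivclp)
qed

lemma mink_sq_minus_commute: "mink_sq (x - y) = mink_sq (y - x)"
  unfolding mink_sq_def by (simp add: norm_minus_commute power2_commute)

lemma causally_disjoint_commute: "causally_disjoint A B \<longleftrightarrow> causally_disjoint B A"
  unfolding causally_disjoint_def by (metis mink_sq_minus_commute)

lemma causally_disjoint_subset:
  "causally_disjoint A B \<Longrightarrow> A0 \<subseteq> A \<Longrightarrow> B0 \<subseteq> B \<Longrightarrow> causally_disjoint A0 B0"
  unfolding causally_disjoint_def by blast

lemma subset_causal_compl_iff: "Z \<subseteq> causal_compl A \<longleftrightarrow> causally_disjoint A Z"
  unfolding causally_disjoint_def causal_compl_def by auto

lemma mem_Xsub_iff: "Y \<in> Xsub XX R \<longleftrightarrow> Y \<in> XX \<and> Y \<subseteq> R"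
  by (simp add: Xsub_def)

lemma mem_Xpairs_iff: "(A, B) \<in> Xpairs XX X \<longleftrightarrow> A \<in> Xsub XX X \<and> B \<in> Xsub XX (X \<inter> causal_compl A)"
  by (auto simp: Xpairs_def mem_Xsub_iff subset_causal_compl_iff)

lemma swap_mem_Xpairs: "P \<in> Xpairs XX X \<Longrightarrow> prod.swap P \<in> Xpairs XX X"
  by (auto simp: Xpairs_def causally_disjoint_commute)

abbreviation Xpairs_joined ::
  "'s::finite mpoint set set \<Rightarrow> 's mpoint set \<Rightarrow> ('s mpoint set \<times> 's mpoint set) \<Rightarrow> _ \<Rightarrow> bool" where
  "Xpairs_joined XX X \<equiv> equivclp (restrictp (Xpairs XX X) pair_le)"

lemma Xpairs_joined_swap:
  "Xpairs_joined XX X P Q \<Longrightarrow> Xpairs_joined XX X (prod.swap P) (prod.swap Q)"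
  by (erule equivclp_restrictp_map) (auto simp: swap_mem_Xpairs pair_le_def)

lemma Xpairs_joined_shrink_fst:
  assumes c2_1: "\<And>X0. X0 \<in> XX \<Longrightarrow> X0 \<subseteq> X \<Longrightarrow>
      \<exists>X00\<in>XX. X00 \<subseteq> X0 \<and> hos_connected (Xsub XX (X \<inter> causal_compl X00)) (\<subseteq>)"
    and AB: "(A, B) \<in> Xpairs XX X" and A0: "A0 \<in> XX" "A0 \<subseteq> A"
    and Z: "Z \<in> Xsub XX (X \<inter> causal_compl A0)"
  shows "Xpairs_joined XX X (A, B) (A0, Z)"
proof -
  have "A \<subseteq> X" "causally_disjoint A B" using AB by (auto simp: Xpairs_def mem_Xsub_iff)
  then obtain A00 where A00: "A00 \<in> XX" "A00 \<subseteq> A0"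
    and conn: "hos_connected (Xsub XX (X \<inter> causal_compl A00)) (\<subseteq>)"
    using c2_1 A0 by blast
  let ?S = "Xsub XX (X \<inter> causal_compl A00)"
  have A00_pair: "(A00, W) \<in> Xpairs XX X \<longleftrightarrow> W \<in> ?S" for W
    using A00 A0 \<open>A \<subseteq> X\<close> by (auto simp: mem_Xpairs_iff mem_Xsub_iff)
  have "B \<in> ?S"
    using AB A00 A0 causally_disjoint_subset[OF \<open>causally_disjoint A B\<close>]
    by (auto simp: mem_Xpairs_iff mem_Xsub_iff subset_causal_compl_iff)
  moreover have "Z \<in> ?S"
    using Z A00 causally_disjoint_subset[of A0 Z A00]
    by (auto simp: mem_Xsub_iff subset_causal_compl_iff)
  ultimately have "equivclp (restrictp ?S (\<subseteq>)) B Z"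
    using conn hos_connected_iff_equivclp by metis
  then have walk: "Xpairs_joined XX X (A00, B) (A00, Z)"
    by (rule equivclp_restrictp_map) (auto simp: A00_pair pair_le_def)
  have "Xpairs_joined XX X (A, B) (A00, B)"
    using AB A00_pair \<open>B \<in> ?S\<close> A00 A0
    by (intro converse_r_into_equivclp) (auto simp: restrictp_def pair_le_def)
  also note walk
  also have "Xpairs_joined XX X (A00, Z) (A0, Z)"
    using A00_pair \<open>Z \<in> ?S\<close> A00 A0 AB Z
    by (intro r_into_equivclp) (auto simp: restrictp_def pair_le_def mem_Xpairs_iff mem_Xsub_iff)
  finally show ?thesis .
qed

lemma Xpairs_joined:
  assumes c2_1: "\<And>X0. X0 \<in> XX \<Longrightarrow> X0 \<subseteq> X \<Longrightarrow>
      \<exists>X00\<in>XX. X00 \<subseteq> X0 \<and> hos_connected (Xsub XX (X \<inter> causal_compl X00)) (\<subseteq>)"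
    and c2_2: "\<And>X1 X2. X1 \<in> XX \<Longrightarrow> X2 \<in> XX \<Longrightarrow> X1 \<subseteq> X \<Longrightarrow> X2 \<subseteq> X \<Longrightarrow>
      \<exists>X10\<in>XX. \<exists>X20\<in>XX. X10 \<subseteq> X1 \<and> X20 \<subseteq> X2 \<and>
        Xsub XX (X \<inter> causal_compl X10 \<inter> causal_compl X20) \<noteq> {}"
    and P: "P \<in> Xpairs XX X" and Q: "Q \<in> Xpairs XX X"
  shows "Xpairs_joined XX X P Q"
proof -
  obtain X1 X2 Y1 Y2 where PQ: "P = (X1, X2)" "Q = (Y1, Y2)" by (metis surj_pair)
  with P Q have P': "(X1, X2) \<in> Xpairs XX X" and Q': "(Y1, Y2) \<in> Xpairs XX X" by simp_all
  then have "X1 \<in> XX" "X1 \<subseteq> X" "Y1 \<in> XX" "Y1 \<subseteq> X"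
    by (auto simp: mem_Xpairs_iff mem_Xsub_iff)
  then obtain X10 Y10 Z where X10: "X10 \<in> XX" "X10 \<subseteq> X1" and Y10: "Y10 \<in> XX" "Y10 \<subseteq> Y1"
    and Z: "Z \<in> Xsub XX (X \<inter> causal_compl X10 \<inter> causal_compl Y10)"
    using c2_2 by blast
  have ZX10: "Z \<in> Xsub XX (X \<inter> causal_compl X10)" and ZY10: "Z \<in> Xsub XX (X \<inter> causal_compl Y10)"
    using Z by (auto simp: mem_Xsub_iff)
  have "(X10, Z) \<in> Xpairs XX X" "(Y10, Z) \<in> Xpairs XX X"
    using X10 Y10 ZX10 ZY10 \<open>X1 \<subseteq> X\<close> \<open>Y1 \<subseteq> X\<close> by (auto simp: mem_Xpairs_iff mem_Xsub_iff)
  then have "(Z, X10) \<in> Xpairs XX X" "(Z, Y10) \<in> Xpairs XX X"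
    using swap_mem_Xpairs by fastforce+
  then have "Xpairs_joined XX X (Z, X10) (Z, Y10)"
    using Xpairs_joined_shrink_fst[OF c2_1] Z by (simp add: mem_Xpairs_iff mem_Xsub_iff)
  then have middle: "Xpairs_joined XX X (X10, Z) (Y10, Z)"
    using Xpairs_joined_swap[of XX X "(Z, X10)" "(Z, Y10)"] by simp
  have "Xpairs_joined XX X (X1, X2) (X10, Z)"
    using Xpairs_joined_shrink_fst[OF c2_1 P' X10 ZX10] .
  also note middle
  also have "Xpairs_joined XX X (Y10, Z) (Y1, Y2)"
    using equivclp_sym[OF Xpairs_joined_shrink_fst[OF c2_1 Q' Y10 ZY10]] .
  finally show ?thesis using PQ by simp
qed

theorem proposition3p3:
  fixes XX :: "'s::finite mpoint set set"
  assumes members: "\<And>X. X \<in> XX \<Longrightarrow> X \<noteq> {} \<and> open X \<and> causally_complete X"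
    and c2_1: "\<And>X X0. X \<in> XX \<Longrightarrow> X0 \<in> XX \<Longrightarrow> X0 \<subseteq> X \<Longrightarrow>
       \<exists>X00\<in>XX. X00 \<subseteq> X0 \<and> Xsub XX (X \<inter> causal_compl X00) \<noteq> {} \<and>
                 hos_connected (Xsub XX (X \<inter> causal_compl X00)) (\<subseteq>)"
    and c2_2: "\<And>X X1 X2. X \<in> XX \<Longrightarrow> X1 \<in> XX \<Longrightarrow> X2 \<in> XX \<Longrightarrow> X1 \<subseteq> X \<Longrightarrow> X2 \<subseteq> X \<Longrightarrow>
       \<exists>X10\<in>XX. \<exists>X20\<in>XX. X10 \<subseteq> X1 \<and> X20 \<subseteq> X2 \<and>
                 Xsub XX (X \<inter> causal_compl X10 \<inter> causal_compl X20) \<noteq> {}"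
  shows "\<forall>X\<in>XX. Xpairs XX X \<noteq> {} \<and> hos_connected (Xpairs XX X) pair_le"
proof
  fix X assume X: "X \<in> XX"
  have c2_1_X: "\<exists>X00\<in>XX. X00 \<subseteq> X0 \<and> hos_connected (Xsub XX (X \<inter> causal_compl X00)) (\<subseteq>)"
    if "X0 \<in> XX" "X0 \<subseteq> X" for X0
    using c2_1[OF X that] by blast
  obtain X00 where "X00 \<in> Xsub XX X" "Xsub XX (X \<inter> causal_compl X00) \<noteq> {}"
    using c2_1[OF X X] by (auto simp: mem_Xsub_iff)
  then have "Xpairs XX X \<noteq> {}" using mem_Xpairs_iff by blast
  moreover have "hos_connected (Xpairs XX X) pair_le"
    unfolding hos_connected_iff_equivclp using Xpairs_joined[OF c2_1_X c2_2[OF X]] by blast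
  ultimately show "Xpairs XX X \<noteq> {} \<and> hos_connected (Xpairs XX X) pair_le" ..
qed

end
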